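(* Let $p,q,\mu_h\in(0,1)$ and $y_0,y_1$, $x_0(y),x_1(y)$ be as in the context, and let $y_b$ be the unique root of the linear function $b(y)=(p\mu_h+\bar p\bar\mu_h)(qy+\bar q)-1$. Then: (i) $1<y_0<y_b<y_1$; (ii) for every real $y$ with $-1\le y\le 1$ we have $x_0(y)<x_1(y)$ and $0<x_0(y)\le 1$; moreover, at $y=0$, $0<x_0(0)<1<x_1(0)$.
   Context: Fix $p,q,\mu_h,\mu_l\in(0,1)$ with $p+q+\mu_h+\mu_l=1$; for real $x$ write $\bar x=1-x$; let $\rho=p/\mu_h+q/\mu_l$ and assume $\rho<1$. Define $a(y)=p\bar\mu_h(qy+\bar q)$, $b(y)=(p\mu_h+\bar p\bar\mu_h)(qy+\bar q)-1$, $c(y)=\bar p\mu_h(qy+\bar q)$ and $\Delta(y)=b(y)^2-4a(y)c(y)=(p\mu_h-\bar p\bar\mu_h)^2(qy+\bar q)^2-2(p\mu_h+\bar p\bar\mu_h)(qy+\bar q)+1$. Its two zeros are $y_0=\frac{p\mu_h+\bar p\bar\mu_h-2\sqrt{p\mu_h\bar p\bar\mu_h}}{(p\mu_h-\bar p\bar\mu_h)^2q}-\frac{\bar q}{q}$ and $y_1=\frac{p\mu_h+\bar p\bar\mu_h+2\sqrt{p\mu_h\bar p\bar\mu_h}}{(p\mu_h-\bar p\bar\mu_h)^2q}-\frac{\bar q}{q}$. Let $\sqrt{\Delta(y)}$ denote the branch analytic on $\mathbb{C}\setminus[y_0,y_1]$ which is positive for real $y<y_0$, and let $x_0(y)=\frac{1-(p\mu_h+\bar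 p\bar\mu_h)(qy+\bar q)-\sqrt{\Delta(y)}}{2p\bar\mu_h(qy+\bar q)}$, $x_1(y)=\frac{1-(p\mu_h+\bar p\bar\mu_h)(qy+\bar q)+\sqrt{\Delta(y)}}{2p\bar\mu_h(qy+\bar q)}$ be the two roots in $x$ of $a(y)x^2+b(y)x+c(y)=0$. *)

theory Defs
  imports "HOL-Analysis.Analysis"
begin

definition bar :: "real \<Rightarrow> real" where
  "bar x = 1 - x"

definition rho :: "real \<Rightarrow> real \<Rightarrow> real \<Rightarrow> real \<Rightarrow> real" where
  "rho p q mh ml = p / mh + q / ml"

definition acoef :: "real \<Rightarrow> real \<Rightarrow> real \<Rightarrow> complex \<Rightarrow> complex" where
  "acoef p q mh y = of_real (p * bar mh) * (of_real q * y + of_real (bar q))"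

definition bcoef :: "real \<Rightarrow> real \<Rightarrow> real \<Rightarrow> complex \<Rightarrow> complex" where
  "bcoef p q mh y = of_real (p * mh + bar p * bar mh) * (of_real q * y + of_real (bar q)) - 1"

definition ccoef :: "real \<Rightarrow> real \<Rightarrow> real \<Rightarrow> complex \<Rightarrow> complex" where
  "ccoef p q mh y = of_real (bar p * mh) * (of_real q * y + of_real (bar q))"

definition Delta :: "real \<Rightarrow> real \<Rightarrow> real \<Rightarrow> complex \<Rightarrow> complex" where
  "Delta p q mh y = (bcoef p q mh y)\<^sup>2 - 4 * acoef p q mh y * ccoef p q mh y"

definition y0 :: "real \<Rightarrow> real \<Rightarrow> real \<Rightarrow> real" where
  "y0 p q mh = (p * mh + bar p * bar mh - 2 * sqrt (p * mh * bar p * bar mh))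
                 / ((p * mh - bar p * bar mh)\<^sup>2 * q) - bar q / q"

definition y1 :: "real \<Rightarrow> real \<Rightarrow> real \<Rightarrow> real" where
  "y1 p q mh = (p * mh + bar p * bar mh + 2 * sqrt (p * mh * bar p * bar mh))
                 / ((p * mh - bar p * bar mh)\<^sup>2 * q) - bar q / q"

text \<open>The roots x_0, x_1, given a value s of the chosen branch of sqrt(Delta(y)).\<close>
definition xroot0 :: "real \<Rightarrow> real \<Rightarrow> real \<Rightarrow> (complex \<Rightarrow> complex) \<Rightarrow> complex \<Rightarrow> complex" where
  "xroot0 p q mh sq y =
     (1 - of_real (p * mh + bar p * bar mh) * (of_real q * y + of_real (bar q)) - sq y)
       / (2 * of_real (p * bar mh) * (of_real q * y + of_real (bar q)))"

definition xroot1 :: "real \<Rightarrow> real \<Rightarrow> real \<Rightarrow> (complex \<Rightarrow> complex) \<Rightarrow> complex \<Rightarrow> complex" where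
  "xroot1 p q mh sq y =
     (1 - of_real (p * mh + bar p * bar mh) * (of_real q * y + of_real (bar q)) + sq y)
       / (2 * of_real (p * bar mh) * (of_real q * y + of_real (bar q)))"

end

theory Submission
  imports Defs
begin

text \<open>Write \<open>A = p\<mu>\<^sub>h\<close>, \<open>B = p'\<mu>\<^sub>h'\<close>, \<open>a = p\<mu>\<^sub>h'\<close>, \<open>c = p'\<mu>\<^sub>h\<close> (primes denoting
  complements), so that \<open>A + B + a + c = 1\<close> and \<open>AB = ac\<close>, and substitute \<open>s = qy + q'\<close>. Then
  \<open>\<Delta> = (1 - (A + B)s)\<^sup>2 - 4ac s\<^sup>2\<close> vanishes at \<open>s = 1 / (A + B \<plusminus> 2\<surd>(ac))\<close>, giving \<open>y\<^sub>0\<close> and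
  \<open>y\<^sub>1\<close>, while \<open>b\<close> vanishes at \<open>s = 1 / (A + B)\<close>. The condition \<open>\<rho> < 1\<close> forces \<open>p < \<mu>\<^sub>h\<close> and
  \<open>q < 1/2\<close>; hence \<open>a \<noteq> c\<close>, and strict AM-GM gives \<open>A + B + 2\<surd>(ac) < 1\<close>, i.e. \<open>y\<^sub>0 > 1\<close>.
  For \<open>-1 \<le> y \<le> 1\<close> we have \<open>0 < s \<le> 1\<close>, and \<open>x\<^sub>0, x\<^sub>1\<close> are the roots of
  \<open>Q(x) = as x\<^sup>2 - (1 - (A + B)s) x + cs\<close>. Since \<open>Q(1) = s - 1 \<le> 0\<close>, the point 1 lies between the
  roots, strictly when \<open>s < 1\<close>, as at \<open>y = 0\<close>.\<close>

lemma quadratic_factorization: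
  fixes \<alpha> \<beta> \<gamma> d x :: real
  assumes "\<alpha> \<noteq> 0" "d\<^sup>2 = \<beta>\<^sup>2 - 4 * \<alpha> * \<gamma>"
  shows "\<alpha> * x\<^sup>2 - \<beta> * x + \<gamma> = \<alpha> * (x - (\<beta> - d) / (2 * \<alpha>)) * (x - (\<beta> + d) / (2 * \<alpha>))"
proof -
  have "\<alpha> * (x - (\<beta> - d) / (2 * \<alpha>)) * (x - (\<beta> + d) / (2 * \<alpha>))
      = \<alpha> * x\<^sup>2 - \<beta> * x + (\<beta>\<^sup>2 - d\<^sup>2) / (4 * \<alpha>)"
    using assms(1) by (simp add: field_simps power2_eq_square)
  also have "(\<beta>\<^sup>2 - d\<^sup>2) / (4 * \<alpha>) = \<gamma>"
    using assms by simp
  finally show ?thesis ..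
qed

lemma quadratic_roots_bracket_one:
  fixes a c s u d x0 x1 :: real
  assumes a: "0 < a" and c: "0 < c" and s: "0 < s" "s \<le> 1" and d: "0 < d"
    and u: "u = 1 - (1 - a - c) * s"
    and disc: "d\<^sup>2 = u\<^sup>2 - 4 * (a * s) * (c * s)"
    and x0: "x0 = (u - d) / (2 * (a * s))" and x1: "x1 = (u + d) / (2 * (a * s))"
  shows "0 < x0" "x0 < x1" "x0 \<le> 1" "1 \<le> x1"
    and "s < 1 \<Longrightarrow> x0 < 1" "s < 1 \<Longrightarrow> 1 < x1"
proof -
  have as: "0 < a * s"
    using a s by simp
  have "(1 - a - c) * s < 1"
  proof (cases "1 - a - c \<le> 0")
    case True
    then have "(1 - a - c) * s \<le> 0"
      using s by (simp add: mult_nonpos_nonneg)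
    then show ?thesis
      by linarith
  next
    case False
    then have "(1 - a - c) * s \<le> 1 - a - c"
      using s by (simp add: mult_left_le)
    then show ?thesis
      using a c by linarith
  qed
  then have "0 < u"
    using u by simp
  moreover have "d\<^sup>2 < u\<^sup>2"
    using disc mult_pos_pos[OF as mult_pos_pos[OF c s(1)]] by linarith
  ultimately have "d < u"
    using power2_less_imp_less[of d u] by simp
  with as show "0 < x0"
    unfolding x0 by simp
  show lt: "x0 < x1"
    unfolding x0 x1 using as d by (intro divide_strict_right_mono) auto
  have "a * s * 1\<^sup>2 - u * 1 + c * s = a * s * (1 - x0) * (1 - x1)"
    unfolding x0 x1 using quadratic_factorization[OF _ disc, of 1] as by fastforce
  moreover have "a * s * 1\<^sup>2 - u * 1 + c * s = s - 1"
    using u by (simp add: algebra_simps)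
  ultimately have "a * s * ((1 - x0) * (1 - x1)) = s - 1"
    by (simp add: mult.assoc)
  then have "(1 - x0) * (1 - x1) = (s - 1) / (a * s)"
    using as a s by (simp add: eq_divide_eq ac_simps)
  then have "(1 - x0) * (1 - x1) \<le> 0" "s < 1 \<Longrightarrow> (1 - x0) * (1 - x1) < 0"
    using as s by (simp_all add: divide_nonpos_pos divide_neg_pos)
  with lt show "x0 \<le> 1" "1 \<le> x1" "s < 1 \<Longrightarrow> x0 < 1" "s < 1 \<Longrightarrow> 1 < x1"
    by (auto simp: mult_le_0_iff mult_less_0_iff)
qed

lemma arith_geo_mean_sqrt_strict:
  fixes x y :: real
  assumes "0 \<le> x" "0 \<le> y" "x \<noteq> y"
  shows "2 * sqrt (x * y) < x + y"
proof -
  have "sqrt x \<noteq> sqrt y"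
    using assms by simp
  then have "0 < (sqrt x - sqrt y)\<^sup>2"
    by simp
  also have "(sqrt x - sqrt y)\<^sup>2 = x + y - 2 * sqrt (x * y)"
    using assms by (simp add: power2_diff real_sqrt_mult)
  finally show ?thesis
    by simp
qed

lemma sum_minus_twice_sqrt_prod_div_sq_diff:
  fixes A B :: real
  assumes "0 < A" "0 < B" "A \<noteq> B"
  shows "(A + B - 2 * sqrt (A * B)) / (A - B)\<^sup>2 = 1 / (A + B + 2 * sqrt (A * B))"
    and "(A + B + 2 * sqrt (A * B)) / (A - B)\<^sup>2 = 1 / (A + B - 2 * sqrt (A * B))"
proof -
  define r where "r = sqrt (A * B)"
  have "r\<^sup>2 = A * B"
    unfolding r_def using assms by simp
  then have factor: "(A - B)\<^sup>2 = (A + B - 2 * r) * (A + B + 2 * r)"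
    by (simp add: power2_eq_square algebra_simps)
  moreover have "(A - B)\<^sup>2 \<noteq> 0"
    using assms(3) by simp
  ultimately have "A + B - 2 * r \<noteq> 0" "A + B + 2 * r \<noteq> 0"
    by auto
  with factor show "(A + B - 2 * sqrt (A * B)) / (A - B)\<^sup>2 = 1 / (A + B + 2 * sqrt (A * B))"
    and "(A + B + 2 * sqrt (A * B)) / (A - B)\<^sup>2 = 1 / (A + B - 2 * sqrt (A * B))"
    unfolding r_def[symmetric] by simp_all
qed

lemma rho_lt_one_imp_less:
  fixes p q mh ml :: real
  assumes "0 < p" "0 < q" "0 < mh" "0 < ml" "rho p q mh ml < 1"
  shows "p < mh" "q < ml"
proof -
  have "0 < p / mh" "0 < q / ml"
    using assms by simp_all
  then have "p / mh < 1" "q / ml < 1"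
    using assms(5) unfolding rho_def by linarith+
  then show "p < mh" "q < ml"
    using assms by (simp_all add: divide_less_eq)
qed

lemma branch_points_bounds:
  fixes p q mh yb :: real
  assumes p: "0 < p" and mh: "0 < mh" and p_mh: "p + mh < 1" "p \<noteq> mh" and q: "0 < q"
    and yb: "bcoef p q mh (complex_of_real yb) = 0"
  shows "1 < y0 p q mh" "y0 p q mh < yb" "yb < y1 p q mh"
proof -
  define A B a c where "A = p * mh" "B = bar p * bar mh" "a = p * bar mh" "c = bar p * mh"
  define r where "r = sqrt (A * B)"
  define f where "f t = (t - bar q) / q" for t
  have pos: "0 < A" "0 < B" "0 < a" "0 < c"
    using p mh p_mh unfolding A_B_a_c_def bar_def by simp_all
  have "A < B"
    using p_mh unfolding A_B_a_c_def bar_def by (simp add: algebra_simps)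
  then have AB: "2 * r < A + B"
    unfolding r_def using pos by (simp add: arith_geo_mean_sqrt_strict)
  have "a \<noteq> c"
    using p_mh unfolding A_B_a_c_def bar_def by (simp add: algebra_simps)
  moreover have "r = sqrt (a * c)"
    unfolding r_def A_B_a_c_def by (simp add: ac_simps)
  ultimately have "2 * r < a + c"
    using pos by (simp add: arith_geo_mean_sqrt_strict)
  moreover have "A + B + a + c = 1"
    unfolding A_B_a_c_def bar_def by (simp add: algebra_simps)
  moreover have "0 < r"
    unfolding r_def using pos by simp
  ultimately have "1 < 1 / (A + B + 2 * r)" "1 / (A + B + 2 * r) < 1 / (A + B)"
      "1 / (A + B) < 1 / (A + B - 2 * r)"
    using pos AB by (auto intro: frac_less2)
  moreover have "strict_mono f"
    unfolding f_def using q by (intro strict_monoI divide_strict_right_mono) auto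
  ultimately have "f 1 < f (1 / (A + B + 2 * r))" "f (1 / (A + B + 2 * r)) < f (1 / (A + B))"
      "f (1 / (A + B)) < f (1 / (A + B - 2 * r))"
    by (simp_all add: strict_mono_less)
  moreover have "f 1 = 1"
    unfolding f_def bar_def using q by simp
  moreover have "y0 p q mh = f ((A + B - 2 * r) / (A - B)\<^sup>2)"
      "y1 p q mh = f ((A + B + 2 * r) / (A - B)\<^sup>2)"
    unfolding y0_def y1_def f_def r_def A_B_a_c_def
    by (simp_all add: diff_divide_distrib divide_divide_eq_left mult.assoc)
  then have "y0 p q mh = f (1 / (A + B + 2 * r))" "y1 p q mh = f (1 / (A + B - 2 * r))"
    using sum_minus_twice_sqrt_prod_div_sq_diff[OF pos(1,2) \<open>A < B\<close>[THEN less_imp_neq]]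
    unfolding r_def by simp_all
  moreover have "yb = f (1 / (A + B))"
  proof -
    have "(A + B) * (q * yb + bar q) = 1"
      using arg_cong[OF yb, of Re] unfolding bcoef_def A_B_a_c_def by simp
    then have "1 / (A + B) = q * yb + bar q"
      using pos by (simp add: divide_eq_eq mult.commute)
    then show ?thesis
      unfolding f_def using q by simp
  qed
  ultimately show "1 < y0 p q mh" "y0 p q mh < yb" "yb < y1 p q mh"
    by simp_all
qed

lemma xroots_real_bracket_one:
  fixes p q mh y d :: real and sq :: "complex \<Rightarrow> complex"
  assumes p: "0 < p" "p < 1" and mh: "0 < mh" "mh < 1"
    and s: "0 < q * y + bar q" "q * y + bar q \<le> 1"
    and d: "0 < d" "sq (complex_of_real y) = complex_of_real d"
    and sq_sq: "(sq (complex_of_real y))\<^sup>2 = Delta p q mh (complex_of_real y)"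
  shows "xroot0 p q mh sq (complex_of_real y) \<in> \<real> \<and> xroot1 p q mh sq (complex_of_real y) \<in> \<real> \<and>
      Re (xroot0 p q mh sq (complex_of_real y)) < Re (xroot1 p q mh sq (complex_of_real y)) \<and>
      0 < Re (xroot0 p q mh sq (complex_of_real y)) \<and> Re (xroot0 p q mh sq (complex_of_real y)) \<le> 1 \<and>
      (q * y + bar q < 1 \<longrightarrow>
        Re (xroot0 p q mh sq (complex_of_real y)) < 1 \<and> 1 < Re (xroot1 p q mh sq (complex_of_real y)))"
proof -
  define s a c where "s = q * y + bar q" "a = p * bar mh" "c = bar p * mh"
  define u where "u = 1 - (1 - a - c) * s"
  have coef: "p * mh + bar p * bar mh = 1 - a - c"
    unfolding s_a_c_def bar_def by (simp add: algebra_simps)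
  have s_of_real: "complex_of_real q * complex_of_real y + complex_of_real (bar q) = complex_of_real s"
    unfolding s_a_c_def by simp
  have "complex_of_real (d\<^sup>2) = complex_of_real (u\<^sup>2 - 4 * (a * s) * (c * s))"
    using sq_sq unfolding d(2) Delta_def bcoef_def acoef_def ccoef_def s_of_real coef u_def
    by (simp add: s_a_c_def power2_eq_square algebra_simps)
  then have disc: "d\<^sup>2 = u\<^sup>2 - 4 * (a * s) * (c * s)"
    by (simp only: of_real_eq_iff)
  have x0: "xroot0 p q mh sq (complex_of_real y) = complex_of_real ((u - d) / (2 * (a * s)))"
    unfolding xroot0_def d(2) s_of_real coef u_def s_a_c_def(2) by simp
  have x1: "xroot1 p q mh sq (complex_of_real y) = complex_of_real ((u + d) / (2 * (a * s)))"
    unfolding xroot1_def d(2) s_of_real coef u_def s_a_c_def(2) by simp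
  have "0 < a" "0 < c"
    using p mh unfolding s_a_c_def bar_def by simp_all
  from quadratic_roots_bracket_one[OF this s[folded s_a_c_def] d(1) u_def disc refl refl]
  show ?thesis
    unfolding x0 x1 s_a_c_def(1)[symmetric] by simp
qed

theorem lemma3p1:
  fixes p q mh ml yb :: real and sq :: "complex \<Rightarrow> complex"
  assumes hp: "0 < p" "p < 1" and hq: "0 < q" "q < 1"
    and hmh: "0 < mh" "mh < 1" and hml: "0 < ml" "ml < 1"
    and hsum: "p + q + mh + ml = 1"
    and hrho: "rho p q mh ml < 1"
    and hyb: "bcoef p q mh (complex_of_real yb) = 0"
    and hol: "sq holomorphic_on
               (- closed_segment (complex_of_real (y0 p q mh)) (complex_of_real (y1 p q mh)))"
    and sq_sq: "\<forall>z \<in> - closed_segment (complex_of_real (y0 p q mh)) (complex_of_real (y1 p q mh)).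
                  (sq z)\<^sup>2 = Delta p q mh z"
    and sq_pos: "\<forall>y::real. y < y0 p q mh \<longrightarrow>
                  Im (sq (complex_of_real y)) = 0 \<and> Re (sq (complex_of_real y)) > 0"
  shows "(1 < y0 p q mh \<and> y0 p q mh < yb \<and> yb < y1 p q mh) \<and>
         (\<forall>y::real. -1 \<le> y \<and> y \<le> 1 \<longrightarrow>
           xroot0 p q mh sq (complex_of_real y) \<in> \<real> \<and>
           xroot1 p q mh sq (complex_of_real y) \<in> \<real> \<and>
           Re (xroot0 p q mh sq (complex_of_real y)) < Re (xroot1 p q mh sq (complex_of_real y)) \<and>
           0 < Re (xroot0 p q mh sq (complex_of_real y)) \<and>
           Re (xroot0 p q mh sq (complex_of_real y)) \<le> 1) \<and>
         (xroot0 p q mh sq 0 \<in> \<real> \<and> xroot1 p q mh sq 0 \<in> \<real> \<and>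
         0 < Re (xroot0 p q mh sq 0) \<and> Re (xroot0 p q mh sq 0) < 1 \<and>
         1 < Re (xroot1 p q mh sq 0))"
proof -
  have "p < mh" "q < ml"
    using rho_lt_one_imp_less[OF hp(1) hq(1) hmh(1) hml(1) hrho] .
  then have "p + mh < 1" "p \<noteq> mh" "2 * q < 1"
    using hsum hp hq by linarith+
  note branch = branch_points_bounds[OF hp(1) hmh(1) this(1,2) hq(1) hyb]
  have roots: "xroot0 p q mh sq (complex_of_real y) \<in> \<real> \<and> xroot1 p q mh sq (complex_of_real y) \<in> \<real> \<and>
      Re (xroot0 p q mh sq (complex_of_real y)) < Re (xroot1 p q mh sq (complex_of_real y)) \<and>
      0 < Re (xroot0 p q mh sq (complex_of_real y)) \<and> Re (xroot0 p q mh sq (complex_of_real y)) \<le> 1 \<and>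
      (q * y + bar q < 1 \<longrightarrow>
        Re (xroot0 p q mh sq (complex_of_real y)) < 1 \<and> 1 < Re (xroot1 p q mh sq (complex_of_real y)))"
    if y: "-1 \<le> y" "y \<le> 1" for y
  proof -
    have "y < y0 p q mh"
      using y branch by linarith
    then have d: "0 < Re (sq (complex_of_real y))"
      "sq (complex_of_real y) = complex_of_real (Re (sq (complex_of_real y)))"
      using sq_pos by (auto simp: complex_eq_iff)
    have sq_Delta: "(sq (complex_of_real y))\<^sup>2 = Delta p q mh (complex_of_real y)"
      using sq_sq \<open>y < y0 p q mh\<close> branch by (simp add: closed_segment_same_Im closed_segment_eq_real_ivl)
    have "q * -1 \<le> q * y" "q * y \<le> q * 1"
      using y hq by (intro mult_left_mono; simp)+
    then have s: "0 < q * y + bar q" "q * y + bar q \<le> 1"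
      using \<open>2 * q < 1\<close> unfolding bar_def by linarith+
    show ?thesis
      using xroots_real_bracket_one[where sq = sq, OF hp hmh s d sq_Delta] .
  qed
  have "q * 0 + bar q < 1"
    using hq unfolding bar_def by simp
  with roots[of 0] show ?thesis
    using branch roots by simp
qed
end
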